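(* Consider the networked $SIRS$-$V_o$ system without media actuator described in the context, and assume the opinion graph (with adjacency matrix $A$) is strongly connected. At any healthy state equilibrium (an equilibrium with $x^*=0_n$), the opinions reach consensus at $o_i^*=0$ for all $i\in[n]$.
   Context: There are $n$ nodes. All parameters are real and nonnegative: $a_{ij},\beta_{ij},\gamma_i,\omega_i,\delta_i,\eta^{\min}_{ij},\Delta\eta_{ij}$. $A=[a_{ij}]$ is the weighted adjacency matrix of the directed opinion graph (edge $j\to i$ iff $a_{ij}>0$). Let $B=[\beta_{ij}]$, $H_{\min}=[\eta^{\min}_{ij}]$, $\Delta H=[\Delta\eta_{ij}]$; for a square matrix $M$, $k_i[M]=\sum_jM_{ij}$, $\widetilde K[M]=\mathrm{diag}(k_i[M])$, $L[M]=\widetilde K[M]-M$; $\widetilde G=\mathrm{diag}(\gamma_i)$, $\widetilde W=\mathrm{diag}(\omega_i)$, $\widetilde D=\mathrm{diag}(\delta_i)$, $H(o)=\mathrm{diag}(o)\Delta H+H_{\min}$. State $(o,s,x,r,v)$ with $\widetilde S=\mathrm{diag}(s)$, $\widetilde R=\mathrm{diag}(r)$, dynamics $\dot o=A(x-o)-2L[A]o$, $\dot s=\widetilde Dv-\widetilde S(Bx+H(o)v)+\widetilde Wr$, $\dot x=\widetilde SBx-\widetilde Gx$, $\dot r=\widetilde Gx-\widetilde Wr-\widetilde RH(o)v$, $\dot v=(\widetilde S+\widetilde R)H(o)v-\widetilde Dv$. A healthy state equilibrium is an equilibrium with $x^*=0_n$. *)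

theory Defs
  imports "HOL-Analysis.Analysis"
begin

text \<open>Nodes are indexed by a finite type 'n (so n = CARD('n)).
  Vectors are real^'n, matrices real^'n^'n with M $ i $ j = M_ij.\<close>

definition diagm :: "real^'n \<Rightarrow> real^'n^'n" where
  "diagm d = (\<chi> i j. if i = j then d $ i else 0)"

definition kvec :: "real^'n^'n \<Rightarrow> real^'n" where
  "kvec M = (\<chi> i. \<Sum>j\<in>UNIV. M $ i $ j)"

definition Ktilde :: "real^'n^'n \<Rightarrow> real^'n^'n" where
  "Ktilde M = diagm (kvec M)"

definition lap :: "real^'n^'n \<Rightarrow> real^'n^'n" where
  "lap M = Ktilde M - M"

definition Hmat :: "real^'n^'n \<Rightarrow> real^'n^'n \<Rightarrow> real^'n \<Rightarrow> real^'n^'n" where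
  "Hmat Hmin dH op = diagm op ** dH + Hmin"

text \<open>Directed opinion graph: edge j \<rightarrow> i iff a_ij > 0.  Strong connectivity:
  every node reaches every node by a nonempty directed path.\<close>
definition strongly_connected :: "real^'n^'n \<Rightarrow> bool" where
  "strongly_connected A \<longleftrightarrow>
     (\<forall>i j. (j, i) \<in> {(j', i'). A $ i' $ j' > 0}\<^sup>+)"

definition o_rhs :: "real^'n^'n \<Rightarrow> real^'n \<Rightarrow> real^'n \<Rightarrow> real^'n" where
  "o_rhs A op x = A *v (x - op) - 2 *\<^sub>R (lap A *v op)"

definition s_rhs where
  "s_rhs B Hmin dH w d op s x r v =
     diagm d *v v - diagm s *v (B *v x + Hmat Hmin dH op *v v) + diagm w *v r"

definition x_rhs where
  "x_rhs B g s x = diagm s *v (B *v x) - diagm g *v x"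

definition r_rhs where
  "r_rhs Hmin dH g w op x r v =
     diagm g *v x - diagm w *v r - diagm r *v (Hmat Hmin dH op *v v)"

definition v_rhs where
  "v_rhs Hmin dH d op s r v =
     (diagm s + diagm r) *v (Hmat Hmin dH op *v v) - diagm d *v v"

definition is_equilibrium ::
  "real^'n^'n \<Rightarrow> real^'n^'n \<Rightarrow> real^'n \<Rightarrow> real^'n \<Rightarrow> real^'n \<Rightarrow>
   real^'n^'n \<Rightarrow> real^'n^'n \<Rightarrow>
   real^'n \<Rightarrow> real^'n \<Rightarrow> real^'n \<Rightarrow> real^'n \<Rightarrow> real^'n \<Rightarrow> bool" where
  "is_equilibrium A B g w d Hmin dH op s x r v \<longleftrightarrow>
     o_rhs A op x = 0 \<and>
     s_rhs B Hmin dH w d op s x r v = 0 \<and>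
     x_rhs B g s x = 0 \<and>
     r_rhs Hmin dH g w op x r v = 0 \<and>
     v_rhs Hmin dH d op s r v = 0"

definition healthy_equilibrium where
  "healthy_equilibrium A B g w d Hmin dH op s x r v \<longleftrightarrow>
     is_equilibrium A B g w d Hmin dH op s x r v \<and> x = 0"

end

theory Submission
  imports Defs
begin

text \<open>At a healthy equilibrium the opinion equation reduces to \<open>A o = 2 K[A] o\<close>: every
  opinion is half the weighted average of its in-neighbours' opinions. Strong connectivity is
  only needed to ensure that every node has an in-neighbour; then \<open>|o_i| \<le> \<parallel>o\<parallel>\<^sub>\<infinity> / 2\<close> for
  all \<open>i\<close>, so the maximum norm of \<open>o\<close> vanishes.\<close>

lemma diagm_mult_vec: "(diagm d *v v) $ i = d $ i * v $ i"
  unfolding diagm_def matrix_vector_mult_def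
  by (simp add: if_distrib[of "\<lambda>t. t * _"] cong: if_cong)

lemma infnorm_le_cart:
  assumes "\<And>i. \<bar>x $ i\<bar> \<le> b"
  shows "infnorm (x :: real^'n) \<le> b"
  unfolding infnorm_cart using assms by (intro cSup_least) auto

lemma nonneg_matrix_vector_mult_le_infnorm:
  assumes "\<forall>i j. 0 \<le> A $ i $ j"
  shows "\<bar>(A *v u) $ i\<bar> \<le> kvec A $ i * infnorm u"
proof -
  have "\<bar>(A *v u) $ i\<bar> \<le> (\<Sum>j\<in>UNIV. \<bar>A $ i $ j * u $ j\<bar>)"
    unfolding matrix_vector_mult_def by (simp add: sum_abs)
  also have "\<dots> \<le> (\<Sum>j\<in>UNIV. A $ i $ j * infnorm u)"
    using assms by (intro sum_mono) (simp add: abs_mult mult_left_mono component_le_infnorm_cart)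
  also have "\<dots> = kvec A $ i * infnorm u"
    unfolding kvec_def by (simp add: sum_distrib_right)
  finally show ?thesis .
qed

lemma eq_0_if_dominated_by_row_sums:
  fixes A :: "real^'n^'n"
  assumes "\<forall>i j. 0 \<le> A $ i $ j" and "\<forall>i. 0 < kvec A $ i" and "1 < c"
    and "\<And>i. c * kvec A $ i * \<bar>u $ i\<bar> \<le> \<bar>(A *v u) $ i\<bar>"
  shows "u = 0"
proof -
  have "c * \<bar>u $ i\<bar> \<le> infnorm u" for i
  proof -
    have "kvec A $ i * (c * \<bar>u $ i\<bar>) \<le> kvec A $ i * infnorm u"
      using assms(4)[of i] nonneg_matrix_vector_mult_le_infnorm[OF assms(1), of u i]
      by (simp add: mult_ac)
    then show ?thesis using assms(2) by simp
  qed
  then have "infnorm u \<le> infnorm u / c"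
    using assms(3) by (intro infnorm_le_cart) (simp add: pos_le_divide_eq mult.commute)
  then have "infnorm u * (c - 1) \<le> 0"
    using assms(3) by (simp add: le_divide_eq algebra_simps)
  then have "infnorm u = 0"
    using assms(3) infnorm_pos_le[of u] by (simp add: mult_le_0_iff)
  then show ?thesis by (simp add: infnorm_eq_0)
qed

lemma strongly_connected_kvec_pos:
  assumes "\<forall>i j. 0 \<le> A $ i $ j" and "strongly_connected A"
  shows "0 < kvec A $ i"
proof -
  have "(i, i) \<in> {(j', i'). A $ i' $ j' > 0}\<^sup>+"
    using assms(2) unfolding strongly_connected_def by blast
  then obtain j where "0 < A $ i $ j" by (cases rule: tranclE) auto
  then show ?thesis
    unfolding kvec_def using assms(1) by (simp add: sum_pos2)
qed

lemma o_rhs_0_nth: "(o_rhs A op 0 $ i) = (A *v op) $ i - 2 * kvec A $ i * op $ i"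
  unfolding o_rhs_def lap_def Ktilde_def
  by (simp add: matrix_vector_mult_diff_rdistrib vec.neg diagm_mult_vec)

theorem lemma4:
  fixes A B Hmin dH :: "real^'n^'n" and g w d op s x r v :: "real^'n"
  assumes "\<forall>i j. A $ i $ j \<ge> 0" and "\<forall>i j. B $ i $ j \<ge> 0"
    and "\<forall>i j. Hmin $ i $ j \<ge> 0" and "\<forall>i j. dH $ i $ j \<ge> 0"
    and "\<forall>i. g $ i \<ge> 0" and "\<forall>i. w $ i \<ge> 0" and "\<forall>i. d $ i \<ge> 0"
    and "strongly_connected A"
    and "healthy_equilibrium A B g w d Hmin dH op s x r v"
  shows "\<forall>i. op $ i = 0"
proof -
  have "o_rhs A op 0 = 0"
    using assms(9) unfolding healthy_equilibrium_def is_equilibrium_def by auto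
  then have "(A *v op) $ i = 2 * kvec A $ i * op $ i" for i
    using o_rhs_0_nth[of A op i] by simp
  moreover have kvec_pos: "\<forall>i. 0 < kvec A $ i"
    using strongly_connected_kvec_pos[OF assms(1,8)] by blast
  ultimately have "op = 0"
    using assms(1) by (intro eq_0_if_dominated_by_row_sums[where c = 2]) (auto simp: abs_mult abs_of_pos kvec_pos)
  then show ?thesis by simp
qed

end
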